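(* Let $K>1$, let $1\le k\le n$, and let $X_1,\ldots,X_n$ be independent non-negative random variables with cdf's $F_1,\ldots,F_n$, each satisfying condition (C) with parameter $K$. Let $q>0$ satisfy $\sum_{i=1}^n F_i(q)\le k-1/2$. Then for every integer $\ell\ge5$, $$\mathbb P\Big\{\operatorname{k\text{-}min}_{1\le i\le n}X_i\le q/K^{\ell}\Big\}\le \frac{4}{2^{\ell/2}}.$$
   Context: For real numbers $a_1,\ldots,a_n$ and $1\le k\le n$, $\operatorname{k\text{-}min}_{i\le n}a_i$ denotes the $k$-th smallest element of the sequence (counted with multiplicity). Condition (C) with parameter $K>1$ for the cdf $F$ of a non-negative random variable: $\frac{F(Kt)}{1-F(Kt)}\ge \frac{2F(t)}{1-F(t)}$ for all $t>0$, with the conventions $1/0=\infty$, $1/\infty=0$. *)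

theory Defs
  imports "HOL-Probability.Probability"
begin

definition kmin :: "nat \<Rightarrow> real list \<Rightarrow> real" where
  "kmin k xs = sort xs ! (k - 1)"

text \<open>The odds p/(1-p) in the extended reals, with the convention 1/0 = infinity
  (only relevant for p = 1, since a cdf takes values in [0,1]).\<close>
definition odds :: "real \<Rightarrow> ereal" where
  "odds p = (if p = 1 then \<infinity> else ereal (p / (1 - p)))"

definition condC :: "real \<Rightarrow> (real \<Rightarrow> real) \<Rightarrow> bool" where
  "condC K F \<longleftrightarrow> (\<forall>t>0. odds (F (K * t)) \<ge> 2 * odds (F t))"

end

theory Submission
  imports Defs
begin

text \<open>If at least \<open>k\<close> of the \<open>X\<^sub>i\<close> are below \<open>t = q / K\<^sup>l\<close>, then the product
  \<open>\<Prod>\<^sub>i L\<^bsup>[X\<^sub>i \<le> t]\<^esup>\<close> with \<open>L = 2\<^sup>l\<close> is at least \<open>L\<^sup>k\<close>, so by independence and Markov's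
  inequality the probability is at most \<open>L\<^sup>-\<^sup>k \<Prod>\<^sub>i (1 + (L - 1) F\<^sub>i(t))\<close>.
  Iterating condition (C) \<open>l\<close> times multiplies the odds of \<open>F\<^sub>i(t)\<close> by \<open>L\<close> on the way up
  to \<open>F\<^sub>i(q)\<close>, and an odds comparison together with convexity of \<open>x \<mapsto> L\<^sup>x\<close> turns this
  into \<open>1 + (L - 1) F\<^sub>i(t) \<le> L\<^bsup>F\<^sub>i(q)\<^esup>\<close>. Hence the bound is
  \<open>L\<^bsup>\<Sum> F\<^sub>i(q) - k\<^esup> \<le> L\<^bsup>-1/2\<^esup> = 2\<^bsup>-l/2\<^esup>\<close>.\<close>

lemma odds_mult_le_imp_le_powr:
  fixes L r p :: real
  assumes L: "L \<ge> 1" and r: "0 \<le> r" "r \<le> 1" and p: "0 \<le> p" "p \<le> 1"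
    and odds_le: "ereal L * odds p \<le> odds r"
  shows "1 + (L - 1) * p \<le> L powr r"
proof (cases "r = 1")
  case True
  then show ?thesis using L p mult_nonneg_nonneg[of "L - 1" "1 - p"] by (simp add: algebra_simps)
next
  case False
  then have r1: "r < 1" using r by simp
  have "p \<noteq> 1" using odds_le False L by (auto simp: odds_def)
  then have p1: "p < 1" using p by simp
  have "L * (p / (1 - p)) \<le> r / (1 - r)" using odds_le False \<open>p \<noteq> 1\<close> by (simp add: odds_def)
  then have "p * (L * (1 - r) + r) \<le> r" using r1 p1 by (simp add: field_simps)
  moreover have pos: "L * (1 - r) + r > 0" using L r r1 by (smt (verit) mult_pos_pos)
  ultimately have p_le: "p \<le> r / (L * (1 - r) + r)" by (simp add: field_simps)
  have "1 + (L - 1) * p \<le> 1 + (L - 1) * (r / (L * (1 - r) + r))"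
    using mult_left_mono[OF p_le, of "L - 1"] L by simp
  also have "\<dots> = L / (L - (L - 1) * r)" using pos by (simp add: field_simps)
  also have "\<dots> \<le> L / L powr (1 - r)"
  proof -
    have "L powr (1 - r) \<le> L - (L - 1) * r"
      using Youngs_inequality_0[of "1 - r" r L 1] L r by (simp add: algebra_simps)
    moreover have "0 < (L - (L - 1) * r) * L powr (1 - r)"
      using L pos by (intro mult_pos_pos) (auto simp: algebra_simps)
    ultimately show ?thesis using L by (intro divide_left_mono) auto
  qed
  also have "\<dots> = L powr r" using L by (simp add: powr_diff)
  finally show ?thesis .
qed

lemma condC_odds_power:
  assumes "condC K G" "K > 1" "t > 0"
  shows "ereal (2 ^ j) * odds (G t) \<le> odds (G (K ^ j * t))"
proof (induction j)
  case 0
  then show ?case by simp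
next
  case (Suc j)
  have "ereal (2 ^ Suc j) * odds (G t) = 2 * (ereal (2 ^ j) * odds (G t))"
    by (simp add: mult.assoc[symmetric])
  also have "\<dots> \<le> 2 * odds (G (K ^ j * t))"
    using Suc by (intro ereal_mult_left_mono) auto
  also have "\<dots> \<le> odds (G (K * (K ^ j * t)))"
    using assms by (simp add: condC_def)
  finally show ?case by (simp add: mult.assoc)
qed

lemma condC_one_plus_le_powr:
  assumes "condC K G" "K > 1" "t > 0" and G_range: "\<And>s. 0 \<le> G s \<and> G s \<le> 1"
  shows "1 + (2 ^ j - 1) * G t \<le> (2 ^ j) powr G (K ^ j * t)"
  using odds_mult_le_imp_le_powr[OF _ _ _ _ _ condC_odds_power[OF assms(1-3)]] G_range
  by simp

lemma kmin_le_imp_card_le: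
  fixes x :: "nat \<Rightarrow> real"
  assumes "kmin k (map x [0..<n]) \<le> t" "1 \<le> k" "k \<le> n"
  shows "k \<le> card {i \<in> {0..<n}. x i \<le> t}"
proof -
  let ?xs = "sort (map x [0..<n])"
  have "\<forall>y \<in> set (take k ?xs). y \<le> t"
  proof
    fix y assume "y \<in> set (take k ?xs)"
    then obtain j where j: "j < k" "y = ?xs ! j" using assms by (auto simp: in_set_conv_nth)
    then have "y \<le> ?xs ! (k - 1)" using assms by (auto intro: sorted_nth_mono)
    then show "y \<le> t" using assms(1) by (simp add: kmin_def)
  qed
  then have "k = length (filter (\<lambda>y. y \<le> t) (take k ?xs))" using assms by simp
  also have "\<dots> \<le> length (filter (\<lambda>y. y \<le> t) ?xs)"
    by (metis append_take_drop_id filter_append length_append le_add1)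
  also have "\<dots> = length (filter (\<lambda>y. y \<le> t) (map x [0..<n]))"
    by (metis mset_filter mset_sort size_mset)
  also have "\<dots> = card {i \<in> {0..<n}. x i \<le> t}"
    by (simp add: length_filter_conv_card) (rule arg_cong[where f = card], auto)
  finally show ?thesis .
qed

lemma sets_card_ge:
  fixes X :: "'i \<Rightarrow> 'a \<Rightarrow> real"
  assumes "finite I" and [measurable]: "\<And>i. i \<in> I \<Longrightarrow> X i \<in> borel_measurable M"
  shows "{\<omega> \<in> space M. k \<le> card {i \<in> I. X i \<omega> \<le> t}} \<in> sets M"
proof -
  have "card {i \<in> I. X i \<omega> \<le> t} = (\<Sum>i\<in>I. if X i \<omega> \<le> t then 1 else 0 :: real)" for \<omega>
    using assms(1) by (simp add: sum.If_cases Int_def conj_commute)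
  then have "{\<omega> \<in> space M. k \<le> card {i \<in> I. X i \<omega> \<le> t}}
      = {\<omega> \<in> space M. real k \<le> (\<Sum>i\<in>I. if X i \<omega> \<le> t then 1 else 0)}"
    by (metis (no_types, lifting) of_nat_le_iff)
  also have "\<dots> \<in> sets M" by measurable
  finally show ?thesis .
qed

lemma (in prob_space) expectation_if_event:
  assumes "A \<in> events"
  shows "expectation (\<lambda>\<omega>. if \<omega> \<in> A then a else b) = b + (a - b) * prob A"
proof -
  have "expectation (\<lambda>\<omega>. if \<omega> \<in> A then a else b) = expectation (\<lambda>\<omega>. b + (a - b) * indicator A \<omega>)"
    by (intro Bochner_Integration.integral_cong) (auto simp: indicator_def)
  also have "\<dots> = b + (a - b) * prob A"
    using assms by (simp add: integrable_indicator_iff emeasure_eq_measure prob_space)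
  finally show ?thesis .
qed

lemma (in prob_space) prob_card_ge_le:
  fixes X :: "'i \<Rightarrow> 'a \<Rightarrow> real"
  assumes indep: "indep_vars (\<lambda>_. borel) X I" and I: "finite I" and L: "L \<ge> 1"
  shows "prob {\<omega> \<in> space M. k \<le> card {i \<in> I. X i \<omega> \<le> t}}
           \<le> (\<Prod>i\<in>I. 1 + (L - 1) * prob {\<omega> \<in> space M. X i \<omega> \<le> t}) / L ^ k"
proof -
  define f where "f x = (if x \<le> t then L else 1)" for x :: real
  define Y where "Y i = f \<circ> X i" for i
  have [measurable]: "f \<in> borel_measurable borel" unfolding f_def by measurable
  have X_meas [measurable]: "X i \<in> borel_measurable M" if "i \<in> I" for i
    using indep that by (auto simp: indep_vars_def)
  have indepY: "indep_vars (\<lambda>_. borel) Y I"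
    unfolding Y_def by (rule indep_vars_compose[OF indep]) simp
  have intY: "integrable M (Y i)" if "i \<in> I" for i
    by (rule integrable_const_bound[where B = L]) (use that L in \<open>auto simp: Y_def f_def\<close>)
  have int_prod: "integrable M (\<lambda>\<omega>. \<Prod>i\<in>I. Y i \<omega>)"
    by (rule indep_vars_integrable[OF I indepY intY])
  have prod_Y: "(\<Prod>i\<in>I. Y i \<omega>) = L ^ card {i \<in> I. X i \<omega> \<le> t}" for \<omega>
    unfolding Y_def f_def o_def by (subst prod.If_cases) (simp_all add: I Int_def conj_commute)
  have "prob {\<omega> \<in> space M. k \<le> card {i \<in> I. X i \<omega> \<le> t}}
      \<le> prob {\<omega> \<in> space M. L ^ k \<le> (\<Prod>i\<in>I. Y i \<omega>)}"
    using L int_prod by (intro finite_measure_mono) (auto simp: prod_Y intro: power_increasing)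
  also have "\<dots> \<le> expectation (\<lambda>\<omega>. \<Prod>i\<in>I. Y i \<omega>) / L ^ k"
    using L by (intro integral_Markov_inequality_measure[OF int_prod]) (auto simp: prod_Y)
  also have "expectation (\<lambda>\<omega>. \<Prod>i\<in>I. Y i \<omega>) = (\<Prod>i\<in>I. expectation (Y i))"
    by (rule indep_vars_lebesgue_integral[OF I indepY intY])
  also have "\<dots> = (\<Prod>i\<in>I. 1 + (L - 1) * prob {\<omega> \<in> space M. X i \<omega> \<le> t})"
  proof (rule prod.cong)
    fix i assume i: "i \<in> I"
    have "expectation (Y i) = expectation (\<lambda>\<omega>. if \<omega> \<in> {\<omega> \<in> space M. X i \<omega> \<le> t} then L else 1)"
      by (intro Bochner_Integration.integral_cong) (auto simp: Y_def f_def)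
    also have "\<dots> = 1 + (L - 1) * prob {\<omega> \<in> space M. X i \<omega> \<le> t}"
      by (rule expectation_if_event) (use i in measurable)
    finally show "expectation (Y i) = 1 + (L - 1) * prob {\<omega> \<in> space M. X i \<omega> \<le> t}" .
  qed simp
  finally show ?thesis .
qed

lemma (in prob_space) prob_kmin_le:
  fixes X :: "nat \<Rightarrow> 'a \<Rightarrow> real"
  assumes indep: "indep_vars (\<lambda>_. borel) X {0..<n}" and "1 \<le> k" "k \<le> n" and L: "L \<ge> 1"
  shows "prob {\<omega> \<in> space M. kmin k (map (\<lambda>i. X i \<omega>) [0..<n]) \<le> t}
           \<le> (\<Prod>i<n. 1 + (L - 1) * prob {\<omega> \<in> space M. X i \<omega> \<le> t}) / L ^ k"
proof -
  have "{\<omega> \<in> space M. kmin k (map (\<lambda>i. X i \<omega>) [0..<n]) \<le> t}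
      \<subseteq> {\<omega> \<in> space M. k \<le> card {i \<in> {0..<n}. X i \<omega> \<le> t}}"
    using kmin_le_imp_card_le assms(2,3) by auto
  moreover have "{\<omega> \<in> space M. k \<le> card {i \<in> {0..<n}. X i \<omega> \<le> t}} \<in> events"
    using indep by (intro sets_card_ge) (auto simp: indep_vars_def)
  ultimately have "prob {\<omega> \<in> space M. kmin k (map (\<lambda>i. X i \<omega>) [0..<n]) \<le> t}
      \<le> prob {\<omega> \<in> space M. k \<le> card {i \<in> {0..<n}. X i \<omega> \<le> t}}"
    by (rule finite_measure_mono)
  also have "\<dots> \<le> (\<Prod>i\<in>{0..<n}. 1 + (L - 1) * prob {\<omega> \<in> space M. X i \<omega> \<le> t}) / L ^ k"
    by (rule prob_card_ge_le[OF indep _ L]) simp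
  finally show ?thesis by (simp add: atLeast0LessThan)
qed

theorem mainTheorem2:
  fixes M :: "'a measure" and X :: "nat \<Rightarrow> 'a \<Rightarrow> real" and F :: "nat \<Rightarrow> real \<Rightarrow> real"
    and K q :: real and n k l :: nat
  assumes "prob_space M"
    and "K > 1"
    and "1 \<le> k" and "k \<le> n"
    and "prob_space.indep_vars M (\<lambda>_. borel) X {0..<n}"
    and "\<And>i \<omega>. i < n \<Longrightarrow> \<omega> \<in> space M \<Longrightarrow> X i \<omega> \<ge> 0"
    and "\<And>i t. i < n \<Longrightarrow> F i t = measure M {\<omega> \<in> space M. X i \<omega> \<le> t}"
    and "\<And>i. i < n \<Longrightarrow> condC K (F i)"
    and "q > 0"
    and "(\<Sum>i<n. F i q) \<le> real k - 1/2"
    and "l \<ge> 5"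
  shows "measure M {\<omega> \<in> space M. kmin k (map (\<lambda>i. X i \<omega>) [0..<n]) \<le> q / K ^ l}
           \<le> 4 / 2 powr (real l / 2)"
proof -
  interpret prob_space M by fact
  define t where "t = q / K ^ l"
  define L :: real where "L = 2 ^ l"
  have t: "t > 0" "K ^ l * t = q" using assms(2,9) by (simp_all add: t_def)
  have L: "L \<ge> 1" "L powr (1/2) = 2 powr (real l / 2)"
    by (simp add: L_def) (simp add: L_def powr_realpow[symmetric] powr_powr)
  have F_le: "1 + (L - 1) * F i t \<le> L powr F i q" if "i < n" for i
    using condC_one_plus_le_powr[OF assms(8)[OF that] assms(2) t(1), of l] assms(7)[OF that]
    by (simp add: L_def t(2))
  have "measure M {\<omega> \<in> space M. kmin k (map (\<lambda>i. X i \<omega>) [0..<n]) \<le> q / K ^ l}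
      \<le> (\<Prod>i<n. 1 + (L - 1) * prob {\<omega> \<in> space M. X i \<omega> \<le> t}) / L ^ k"
    unfolding t_def by (rule prob_kmin_le[OF assms(5,3,4) L(1)])
  also have "\<dots> = (\<Prod>i<n. 1 + (L - 1) * F i t) / L ^ k"
    using assms(7) by simp
  also have "\<dots> \<le> (\<Prod>i<n. L powr F i q) / L ^ k"
    using F_le L assms(7) by (intro divide_right_mono prod_mono) auto
  also have "\<dots> = L powr (\<Sum>i<n. F i q) / L powr real k"
    using L by (simp add: powr_sum powr_realpow)
  also have "\<dots> \<le> L powr (real k - 1/2) / L powr real k"
    using assms(10) L by (intro divide_right_mono powr_mono) auto
  also have "\<dots> = 1 / 2 powr (real l / 2)"
    using L by (simp add: powr_diff)
  also have "\<dots> \<le> 4 / 2 powr (real l / 2)" by (simp add: divide_right_mono)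
  finally show ?thesis .
qed

end
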